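(* Let $T\ge1$ and $\eta>0$, and run SMD with $\eta_t=\eta/\sqrt t$. For $j<T$ let $\alpha_j=\frac1{(T-j)(T-j+1)}$, and for $t\ge\lceil T/2\rceil$ let $$w_t=\sum_{j=\lceil T/2\rceil}^{\min(t,T-1)}\alpha_j(x_t-x_j),\quad z_t=\sum_{j=\lceil T/2\rceil}^{\min(t,T-1)}\alpha_jB_\psi(x_j,x_t),\quad \rho_t=\sum_{j=\lceil T/2\rceil}^{\min(t,T-1)}\alpha_j.$$ Then $$f(x_T)-f^*\le\frac2T\sum_{t=\lceil T/2\rceil}^T(f(x_t)-f^* )+\sum_{t=\lceil T/2\rceil}^T\langle\xi_t,w_t\rangle+\frac{\eta}{\sqrt{2T}}\sum_{t=\lceil T/2\rceil}^T\rho_t\|\hat g_t\|_*^2+\frac{\sqrt2}{\eta\sqrt T}\sum_{t=\lceil T/2\rceil}^Tz_t.$$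
   Context: Let $\|\cdot\|$ be a norm on $\mathbb R^d$ with dual norm $\|y\|_*=\sup_{\|w\|\le1}\langle y,w\rangle$. Let $\mathcal X\subseteq\mathbb R^d$ be nonempty, closed and convex, and $f:\mathcal X\to\mathbb R$ convex with a minimizer $x^*\in\mathcal X$, $f^*=f(x^* )$. The regularizer $\psi:\mathbb R^d\to(-\infty,+\infty]$ satisfies Assumption 1: closed, convex, differentiable on $\mathrm{int}(\mathrm{dom}\,\psi)\neq\emptyset$, $1$-strongly convex w.r.t. $\|\cdot\|$, $\mathcal X\subseteq\mathrm{dom}\,\psi$, and either $\|\nabla\psi(y_k)\|_2\to\infty$ for every sequence in $\mathrm{int}\,\mathrm{dom}\,\psi$ converging to a boundary point of $\mathrm{dom}\,\psi$, or $\mathcal X\subseteq\mathrm{int}\,\mathrm{dom}\,\psi$. $B_\psi(x,y)=\psi(x)-\psi(y)-\langle x-y,\nabla\psi(y)\rangle$. SMD: pick $x_1\in\mathrm{int}\,\mathrm{dom}\,\psi$; at step $t$ receive $\hat g_t=g_t-\xi_t$ with $g_t\in\partial f(x_t)$ and arbitrary $\xi_t\in\mathbb R^d$, and set $x_{t+1}=\arg\min_{x\in\mathcal X}\langle\hat g_t,x\rangle+\eta_t^{-1}B_\psi(x,x_t)$. Empty sums are zero. *)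

theory Defs
  imports "HOL-Analysis.Analysis"
begin

definition is_norm :: "('a::euclidean_space \<Rightarrow> real) \<Rightarrow> bool" where
  "is_norm nrm \<longleftrightarrow>
     (\<forall>x. nrm x = 0 \<longleftrightarrow> x = 0) \<and>
     (\<forall>c x. nrm (c *\<^sub>R x) = \<bar>c\<bar> * nrm x) \<and>
     (\<forall>x y. nrm (x + y) \<le> nrm x + nrm y)"

definition dual_norm :: "('a::euclidean_space \<Rightarrow> real) \<Rightarrow> 'a \<Rightarrow> real" where
  "dual_norm nrm y = Sup {inner y w | w. nrm w \<le> 1}"

definition subgrad :: "'a::euclidean_space set \<Rightarrow> ('a \<Rightarrow> real) \<Rightarrow> 'a \<Rightarrow> 'a set" where
  "subgrad X f x = {g. \<forall>y\<in>X. f y \<ge> f x + inner g (y - x)}"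

text \<open>The regularizer psi : R^d \<rightarrow> (-inf,+inf] is represented by its effective domain D
  (psi = +inf outside D) and its real values on D; gpsi is its gradient on interior D.
  Assumption 1 of the paper.\<close>
definition regularizer_assm ::
  "('a::euclidean_space \<Rightarrow> real) \<Rightarrow> 'a set \<Rightarrow> 'a set \<Rightarrow> ('a \<Rightarrow> real) \<Rightarrow> ('a \<Rightarrow> 'a) \<Rightarrow> bool" where
  "regularizer_assm nrm X D psi gpsi \<longleftrightarrow>
     \<comment> \<open>closed (lower semicontinuous): epigraph is closed\<close>
     closed {(x, s). x \<in> D \<and> psi x \<le> s} \<and>
     \<comment> \<open>convex\<close>
     convex D \<and> convex_on D psi \<and>
     \<comment> \<open>differentiable on the nonempty interior of the domain, with gradient gpsi\<close>
     interior D \<noteq> {} \<and>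
     (\<forall>y\<in>interior D. (psi has_derivative (\<lambda>h. inner (gpsi y) h)) (at y)) \<and>
     \<comment> \<open>1-strongly convex w.r.t. nrm\<close>
     (\<forall>x\<in>D. \<forall>y\<in>D. \<forall>u\<in>{0..1}.
        psi (u *\<^sub>R x + (1 - u) *\<^sub>R y)
          \<le> u * psi x + (1 - u) * psi y - u * (1 - u) / 2 * (nrm (x - y))\<^sup>2) \<and>
     X \<subseteq> D \<and>
     ((\<forall>ys p. (\<forall>k. ys k \<in> interior D) \<longrightarrow> ys \<longlonglongrightarrow> p \<longrightarrow> p \<in> frontier D \<longrightarrow>
          filterlim (\<lambda>k. norm (gpsi (ys k))) at_top sequentially)
      \<or> X \<subseteq> interior D)"

definition bregman :: "('a::euclidean_space \<Rightarrow> real) \<Rightarrow> ('a \<Rightarrow> 'a) \<Rightarrow> 'a \<Rightarrow> 'a \<Rightarrow> real" where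
  "bregman psi gpsi x y = psi x - psi y - inner (x - y) (gpsi y)"

end

theory Submission
  imports Defs
begin

text \<open>
  Fix an anchor \<open>j \<ge> \<lceil>T/2\<rceil>\<close>. The one-step mirror-descent inequality with comparator \<open>x\<^sub>j\<close>,
  summed over \<open>t = j..T\<close>, bounds \<open>\<Sum>\<^sub>t (f(x\<^sub>t) - f(x\<^sub>j))\<close> by noise, gradient and Bregman terms.
  Because \<open>B\<^sub>\<psi>(x\<^sub>j, x\<^sub>j) = 0\<close> and \<open>1/\<eta>\<^sub>t = \<surd>t/\<eta>\<close> grows by at most \<open>\<surd>2/(\<eta>\<surd>T)\<close> per step once
  \<open>t \<ge> T/2\<close>, the Bregman terms telescope to \<open>\<surd>2/(\<eta>\<surd>T) \<Sum>\<^sub>t B\<^sub>\<psi>(x\<^sub>j, x\<^sub>t)\<close>. The last iterate is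
  recovered from these anchored regrets by the exact identity
  \<open>q\<^sub>T = (\<Sum>\<^sub>t\<^sub>\<ge>\<^sub>c q\<^sub>t)/(T-c+1) + \<Sum>\<^sub>j \<alpha>\<^sub>j \<Sum>\<^sub>t\<^sub>\<ge>\<^sub>j (q\<^sub>t - q\<^sub>j)\<close>, and exchanging the order of
  summation produces \<open>w\<^sub>t\<close>, \<open>z\<^sub>t\<close> and \<open>\<rho>\<^sub>t\<close>. The first-order optimality condition at \<open>x\<^sub>t\<^sub>+\<^sub>1\<close> needs
  \<open>x\<^sub>t\<^sub>+\<^sub>1 \<in> int dom \<psi>\<close>: otherwise the gradient of \<open>\<psi>\<close> would blow up along the segment towards
  an interior point of \<open>X\<close>, whereas minimality keeps it bounded there.
\<close>

section \<open>Norms given by \<open>is_norm\<close>\<close>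

lemma is_norm_scaleR: "is_norm nrm \<Longrightarrow> nrm (c *\<^sub>R x) = \<bar>c\<bar> * nrm x"
  and is_norm_triangle: "is_norm nrm \<Longrightarrow> nrm (x + y) \<le> nrm x + nrm y"
  and is_norm_eq_0_iff: "is_norm nrm \<Longrightarrow> nrm x = 0 \<longleftrightarrow> x = 0"
  unfolding is_norm_def by blast+

lemma is_norm_minus_commute: "is_norm nrm \<Longrightarrow> nrm (x - y) = nrm (y - x)"
  using is_norm_scaleR[of nrm "-1" "x - y"] by simp

lemma is_norm_nonneg:
  assumes "is_norm nrm" shows "nrm x \<ge> 0"
proof -
  have "nrm 0 \<le> nrm x + nrm (- x)" using is_norm_triangle[OF assms, of x "- x"] by simp
  then show ?thesis
    using is_norm_scaleR[OF assms, of 0 x] is_norm_scaleR[OF assms, of "-1" x] by simp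
qed

lemma is_norm_pos: "is_norm nrm \<Longrightarrow> x \<noteq> 0 \<Longrightarrow> nrm x > 0"
  using is_norm_nonneg is_norm_eq_0_iff by (metis less_eq_real_def)

lemma convex_on_is_norm:
  assumes "is_norm nrm" shows "convex_on UNIV nrm"
proof
  fix t :: real and u v assume "0 < t" "t < 1"
  then show "nrm ((1 - t) *\<^sub>R u + t *\<^sub>R v) \<le> (1 - t) * nrm u + t * nrm v"
    using is_norm_triangle[OF assms] is_norm_scaleR[OF assms] by (metis abs_of_nonneg less_eq_real_def diff_ge_0_iff_ge)
qed simp

lemma is_norm_ge_mult_norm:
  fixes nrm :: "'a::euclidean_space \<Rightarrow> real"
  assumes "is_norm nrm"
  obtains c where "c > 0" "\<And>x. c * norm x \<le> nrm x"
proof -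
  have "continuous_on (sphere (0::'a) 1) nrm"
    using convex_on_continuous[OF open_UNIV convex_on_is_norm[OF assms]] continuous_on_subset by blast
  then obtain x0 where x0: "x0 \<in> sphere (0::'a) 1" "\<And>y. y \<in> sphere 0 1 \<Longrightarrow> nrm x0 \<le> nrm y"
    using continuous_attains_inf[of "sphere (0::'a) 1" nrm] by fastforce
  have "nrm x0 * norm x \<le> nrm x" for x
  proof (cases "x = 0")
    case False
    have "nrm x0 \<le> nrm ((1 / norm x) *\<^sub>R x)" using False by (intro x0(2)) simp
    also have "\<dots> = nrm x / norm x" using is_norm_scaleR[OF assms] by simp
    finally show ?thesis using False by (simp add: field_simps)
  qed (use is_norm_scaleR[OF assms, of 0 0] in simp)
  moreover have "nrm x0 > 0" using x0(1) by (intro is_norm_pos[OF assms]) auto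
  ultimately show ?thesis using that by blast
qed

lemma inner_le_dual_norm_mult:
  fixes nrm :: "'a::euclidean_space \<Rightarrow> real"
  assumes "is_norm nrm"
  shows "inner v w \<le> dual_norm nrm v * nrm w"
proof (cases "w = 0")
  case True then show ?thesis using is_norm_scaleR[OF assms, of 0 0] by simp
next
  case False
  obtain c where c: "c > 0" "\<And>x. c * norm x \<le> nrm x" using is_norm_ge_mult_norm[OF assms] by blast
  have "bdd_above {inner v u | u. nrm u \<le> 1}"
  proof (rule bdd_aboveI)
    fix y assume "y \<in> {inner v u | u. nrm u \<le> 1}"
    then obtain u where u: "y = inner v u" "nrm u \<le> 1" by blast
    have "norm u \<le> 1 / c" using c(2)[of u] u(2) c(1) by (simp add: field_simps)
    then have "norm v * norm u \<le> norm v / c" by (simp add: mult_left_mono divide_inverse)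
    then show "y \<le> norm v / c" using u(1) norm_cauchy_schwarz[of v u] by linarith
  qed
  moreover have p: "nrm w > 0" using is_norm_pos[OF assms False] .
  then have "nrm ((1 / nrm w) *\<^sub>R w) \<le> 1" using is_norm_scaleR[OF assms] by simp
  ultimately have "inner v ((1 / nrm w) *\<^sub>R w) \<le> dual_norm nrm v"
    unfolding dual_norm_def by (intro cSup_upper) blast+
  then show ?thesis using p by (simp add: field_simps)
qed

section \<open>Strongly convex regularizers\<close>

lemma has_derivative_difference_quotient_at_right:
  assumes "(psi has_derivative (\<lambda>h. inner G h)) (at y)"
  shows "((\<lambda>s. (psi (y + s *\<^sub>R v) - psi y) / s) \<longlongrightarrow> inner G v) (at_right 0)"
proof -
  have "((\<lambda>s. y + s *\<^sub>R v) has_derivative (\<lambda>s. s *\<^sub>R v)) (at (0::real))"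
    by (auto intro!: derivative_eq_intros)
  moreover have "(psi has_derivative (\<lambda>h. inner G h)) (at (y + 0 *\<^sub>R v))" using assms by simp
  ultimately have "((\<lambda>s. psi (y + s *\<^sub>R v)) has_derivative (\<lambda>s. inner G v * s)) (at (0::real))"
    using diff_chain_at by (fastforce simp: o_def mult.commute)
  then have "((\<lambda>s. psi (y + s *\<^sub>R v)) has_field_derivative inner G v) (at (0::real))"
    unfolding has_field_derivative_def .
  then have "((\<lambda>s. (psi (y + s *\<^sub>R v) - psi y) / s) \<longlongrightarrow> inner G v) (at 0)"
    unfolding has_field_derivative_iff by simp
  then show ?thesis by (rule tendsto_mono[OF at_le, rotated]) simp
qed

lemma regularizer_assmD:
  assumes "regularizer_assm nrm X D psi gpsi"
  shows "convex D" "X \<subseteq> D"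
    "\<And>y. y \<in> interior D \<Longrightarrow> (psi has_derivative (\<lambda>h. inner (gpsi y) h)) (at y)"
    "\<And>x y u. x \<in> D \<Longrightarrow> y \<in> D \<Longrightarrow> 0 \<le> u \<Longrightarrow> u \<le> 1 \<Longrightarrow>
        psi (u *\<^sub>R x + (1 - u) *\<^sub>R y) \<le> u * psi x + (1 - u) * psi y - u * (1 - u) / 2 * (nrm (x - y))\<^sup>2"
  using assms unfolding regularizer_assm_def by auto

lemma regularizer_gradient_ineq:
  assumes psi: "regularizer_assm nrm X D psi gpsi" and y: "y \<in> interior D" and w: "w \<in> D"
  shows "psi y + inner (gpsi y) (w - y) + (nrm (w - y))\<^sup>2 / 2 \<le> psi w"
proof -
  define N where "N = (nrm (w - y))\<^sup>2"
  have yD: "y \<in> D" using y interior_subset by blast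
  have ev: "eventually (\<lambda>s. (psi (y + s *\<^sub>R (w - y)) - psi y) / s \<le> psi w - psi y - (1 - s) / 2 * N)
      (at_right 0)"
    using eventually_at_right_real[OF zero_less_one]
  proof (rule eventually_mono)
    fix s :: real assume s: "s \<in> {0<..<1}"
    have "s *\<^sub>R w + (1 - s) *\<^sub>R y = y + s *\<^sub>R (w - y)" by (simp add: algebra_simps)
    then have "psi (y + s *\<^sub>R (w - y)) - psi y \<le> s * (psi w - psi y - (1 - s) / 2 * N)"
      using regularizer_assmD(4)[OF psi w yD, of s] s unfolding N_def by (simp add: algebra_simps)
    then show "(psi (y + s *\<^sub>R (w - y)) - psi y) / s \<le> psi w - psi y - (1 - s) / 2 * N"
      using s by (simp add: divide_simps mult.commute)
  qed
  have lim: "((\<lambda>s. psi w - psi y - (1 - s) / 2 * N) \<longlongrightarrow> psi w - psi y - (1 - 0) / 2 * N) (at_right (0::real))"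
    by (intro tendsto_intros) auto
  have "inner (gpsi y) (w - y) \<le> psi w - psi y - (1 - 0) / 2 * N"
    by (rule tendsto_le[OF _ lim has_derivative_difference_quotient_at_right[OF regularizer_assmD(3)[OF psi y]] ev])
      simp
  then show ?thesis unfolding N_def by simp
qed

lemma bregman_ge_half_sq:
  assumes "regularizer_assm nrm X D psi gpsi" "y \<in> interior D" "w \<in> D"
  shows "(nrm (w - y))\<^sup>2 / 2 \<le> bregman psi gpsi w y"
  using regularizer_gradient_ineq[OF assms] unfolding bregman_def by (simp add: inner_commute)

lemma bregman_nonneg:
  assumes "regularizer_assm nrm X D psi gpsi" "y \<in> interior D" "w \<in> D"
  shows "0 \<le> bregman psi gpsi w y"
  by (rule order_trans[OF _ bregman_ge_half_sq[OF assms]]) simp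

lemma bregman_same [simp]: "bregman psi gpsi u u = 0"
  unfolding bregman_def by simp

section \<open>A single mirror step\<close>

definition is_mirror_step ::
  "'a::euclidean_space set \<Rightarrow> ('a \<Rightarrow> real) \<Rightarrow> ('a \<Rightarrow> 'a) \<Rightarrow> 'a \<Rightarrow> real \<Rightarrow> 'a \<Rightarrow> 'a \<Rightarrow> bool" where
  "is_mirror_step X psi gpsi gh e y y' \<longleftrightarrow> y' \<in> X \<and>
     (\<forall>u\<in>X. inner gh y' + bregman psi gpsi y' y / e \<le> inner gh u + bregman psi gpsi u y / e)"

lemma is_mirror_step_segment:
  assumes X: "convex X" and u: "u \<in> X" and e: "e > 0"
    and step: "is_mirror_step X psi gpsi gh e y y'" and s: "0 < s" "s \<le> 1"
  shows "- s * (e * inner gh (u - y') - inner (u - y') (gpsi y)) \<le> psi (y' + s *\<^sub>R (u - y')) - psi y'"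
proof -
  define v where "v = y' + s *\<^sub>R (u - y')"
  have y': "y' \<in> X" using step unfolding is_mirror_step_def by blast
  have "v = (1 - s) *\<^sub>R y' + s *\<^sub>R u" unfolding v_def by (simp add: algebra_simps)
  then have "v \<in> X" using convexD[OF X y' u, of "1 - s" s] s by simp
  then have "inner gh y' + bregman psi gpsi y' y / e \<le> inner gh v + bregman psi gpsi v y / e"
    using step unfolding is_mirror_step_def by blast
  then have "e * (inner gh y' + bregman psi gpsi y' y / e) \<le> e * (inner gh v + bregman psi gpsi v y / e)"
    using e by (intro mult_left_mono) auto
  then have "e * inner gh y' + bregman psi gpsi y' y \<le> e * inner gh v + bregman psi gpsi v y"
    using e by (simp add: distrib_left)
  moreover have "inner gh v = inner gh y' + s * inner gh (u - y')"
    unfolding v_def by (simp add: inner_add_right)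
  moreover have "inner (v - y) (gpsi y) = inner (y' - y) (gpsi y) + s * inner (u - y') (gpsi y)"
    unfolding v_def by (simp add: inner_diff_left inner_add_left)
  ultimately show ?thesis unfolding v_def[symmetric] bregman_def by (simp add: algebra_simps)
qed

lemma is_mirror_step_optimality:
  assumes psi: "regularizer_assm nrm X D psi gpsi" and X: "convex X" and u: "u \<in> X" and e: "e > 0"
    and step: "is_mirror_step X psi gpsi gh e y y'" and y': "y' \<in> interior D"
  shows "0 \<le> e * inner gh (u - y') - inner (u - y') (gpsi y) + inner (gpsi y') (u - y')"
proof -
  define L where "L = e * inner gh (u - y') - inner (u - y') (gpsi y)"
  have "eventually (\<lambda>s. - L \<le> (psi (y' + s *\<^sub>R (u - y')) - psi y') / s) (at_right 0)"
    using eventually_at_right_real[OF zero_less_one]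
  proof (rule eventually_mono)
    fix s :: real assume s: "s \<in> {0<..<1}"
    then have "- s * L \<le> psi (y' + s *\<^sub>R (u - y')) - psi y'"
      unfolding L_def by (intro is_mirror_step_segment[OF X u e step]) auto
    then show "- L \<le> (psi (y' + s *\<^sub>R (u - y')) - psi y') / s"
      using s by (simp add: divide_simps mult.commute)
  qed
  then have "- L \<le> inner (gpsi y') (u - y')"
    by (rule tendsto_le[OF _ has_derivative_difference_quotient_at_right[OF regularizer_assmD(3)[OF psi y']]
          tendsto_const, rotated]) simp
  then show ?thesis unfolding L_def by simp
qed

lemma is_mirror_step_gradient_on_segment:
  assumes psi: "regularizer_assm nrm X D psi gpsi" and X: "convex X" and u: "u \<in> X" and e: "e > 0"
    and step: "is_mirror_step X psi gpsi gh e y y'" and s: "0 < s" "s \<le> 1"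
    and v: "y' + s *\<^sub>R (u - y') \<in> interior D"
  shows "- (e * inner gh (u - y') - inner (u - y') (gpsi y)) \<le> inner (gpsi (y' + s *\<^sub>R (u - y'))) (u - y')"
proof -
  define v where "v = y' + s *\<^sub>R (u - y')"
  have "y' \<in> D" using step regularizer_assmD(2)[OF psi] unfolding is_mirror_step_def by blast
  with regularizer_gradient_ineq[OF psi v[folded v_def]]
  have "psi v + inner (gpsi v) (y' - v) + (nrm (y' - v))\<^sup>2 / 2 \<le> psi y'" .
  moreover have "inner (gpsi v) (y' - v) = - s * inner (gpsi v) (u - y')"
    unfolding v_def by (simp add: inner_diff_right inner_add_right)
  ultimately have "psi v - s * inner (gpsi v) (u - y') \<le> psi y'"
    using zero_le_power2[of "nrm (y' - v)"] by linarith
  moreover have "- s * (e * inner gh (u - y') - inner (u - y') (gpsi y)) \<le> psi v - psi y'"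
    unfolding v_def by (rule is_mirror_step_segment[OF X u e step s])
  ultimately have "s * (- (e * inner gh (u - y') - inner (u - y') (gpsi y))) \<le> s * inner (gpsi v) (u - y')"
    by (simp only: mult_minus_right mult_minus_left)
  then show ?thesis unfolding v_def[symmetric] using s(1) by (simp only: mult_le_cancel_left_pos)
qed

lemma is_mirror_step_gradient_bounded:
  assumes psi: "regularizer_assm nrm X D psi gpsi" and X: "convex X" and e: "e > 0"
    and step: "is_mirror_step X psi gpsi gh e y y'" and a: "a \<in> X" "a \<in> interior D"
  obtains K where "\<And>s. 0 < s \<Longrightarrow> s \<le> 1 \<Longrightarrow> y' + s *\<^sub>R (a - y') \<in> interior D \<and>
    norm (gpsi (y' + s *\<^sub>R (a - y'))) \<le> K"
proof -
  have y'D: "y' \<in> D" using step regularizer_assmD(2)[OF psi] unfolding is_mirror_step_def by blast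
  obtain r where r: "r > 0" "cball a r \<subseteq> interior D"
    using a(2) open_contains_cball open_interior by blast
  have "continuous_on (cball a r) psi"
  proof (rule continuous_at_imp_continuous_on, rule ballI)
    fix w assume "w \<in> cball a r"
    then show "isCont psi w"
      using r(2) regularizer_assmD(3)[OF psi] has_derivative_continuous by blast
  qed
  moreover have "cball a r \<noteq> {}" using r(1) by simp
  ultimately obtain M where M: "\<And>w. w \<in> cball a r \<Longrightarrow> psi w \<le> M"
    using continuous_attains_sup[OF compact_cball] by blast
  define L where "L = e * inner gh (a - y') - inner (a - y') (gpsi y)"
  have L_frac: "t * L \<le> \<bar>L\<bar>" if "0 \<le> t" "t \<le> 1" for t
    using mult_left_le_one_le[OF abs_ge_zero[of L] that] mult_left_mono[OF abs_ge_self[of L] that(1)] by linarith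
  have "y' + s *\<^sub>R (a - y') \<in> interior D \<and> norm (gpsi (y' + s *\<^sub>R (a - y'))) \<le> \<bar>M - psi y' + 2 * \<bar>L\<bar>\<bar> / r"
    if s: "0 < s" "s \<le> 1" for s
  proof
    define v where "v = y' + s *\<^sub>R (a - y')"
    define G where "G = gpsi v"
    have "y' - s *\<^sub>R (y' - a) \<in> interior D"
      by (rule mem_interior_closure_convex_shrink[OF regularizer_assmD(1)[OF psi] a(2)])
        (use y'D closure_subset s in auto)
    then show v: "v \<in> interior D" unfolding v_def by (simp add: algebra_simps)
    have gL: "- L \<le> inner G (a - y')"
      unfolding G_def L_def v_def by (rule is_mirror_step_gradient_on_segment[OF psi X a(1) e step s v[unfolded v_def]])
    have "- s * L \<le> psi v - psi y'"
      unfolding v_def L_def by (rule is_mirror_step_segment[OF X a(1) e step s])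
    moreover have "s * L \<le> \<bar>L\<bar>" using L_frac s by simp
    ultimately have psi_v: "psi y' - \<bar>L\<bar> \<le> psi v" by linarith
    show "norm (gpsi v) \<le> \<bar>M - psi y' + 2 * \<bar>L\<bar>\<bar> / r"
    proof (cases "G = 0")
      case False
      \<comment> \<open>Test the gradient inequality at \<open>v\<close> against the point of the ball in direction \<open>G\<close>.\<close>
      define w where "w = a + (r / norm G) *\<^sub>R G"
      have "w \<in> cball a r" unfolding w_def using False r by (simp add: dist_norm)
      then have wD: "w \<in> D" and "psi w \<le> M" using r(2) interior_subset M by blast+
      moreover have "psi v + inner G (w - v) + (nrm (w - v))\<^sup>2 / 2 \<le> psi w"
        unfolding G_def by (rule regularizer_gradient_ineq[OF psi v wD])
      moreover have "w - v = (1 - s) *\<^sub>R (a - y') + (r / norm G) *\<^sub>R G"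
        unfolding w_def v_def by (simp add: algebra_simps)
      then have "inner G (w - v) = (1 - s) * inner G (a - y') + r * norm G"
        using False by (simp add: inner_add_right power2_norm_eq_inner[symmetric] power2_eq_square)
      moreover have "(1 - s) * (- L) \<le> (1 - s) * inner G (a - y')"
        using gL s by (intro mult_left_mono) auto
      moreover have "(1 - s) * L \<le> \<bar>L\<bar>" using L_frac s by simp
      ultimately have "r * norm G \<le> M - psi y' + 2 * \<bar>L\<bar>"
        using psi_v zero_le_power2[of "nrm (w - v)"] by linarith
      then show ?thesis unfolding G_def using r(1) by (simp add: field_simps)
    qed (use r(1) in \<open>simp add: G_def\<close>)
  qed
  then show ?thesis using that by blast
qed

lemma is_mirror_step_interior:
  assumes psi: "regularizer_assm nrm X D psi gpsi" and X: "convex X" and e: "e > 0"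
    and step: "is_mirror_step X psi gpsi gh e y y'" and a: "a \<in> X" "a \<in> interior D"
  shows "y' \<in> interior D"
proof (rule ccontr)
  assume y': "y' \<notin> interior D"
  have "y' \<in> X" using step unfolding is_mirror_step_def by blast
  then have barrier: "\<And>ys p. (\<And>k. ys k \<in> interior D) \<Longrightarrow> ys \<longlonglongrightarrow> p \<Longrightarrow> p \<in> frontier D \<Longrightarrow>
      filterlim (\<lambda>k. norm (gpsi (ys k))) at_top sequentially"
    using psi y' unfolding regularizer_assm_def by blast
  have "y' \<in> frontier D"
    using \<open>y' \<in> X\<close> regularizer_assmD(2)[OF psi] y' closure_subset unfolding frontier_def by blast
  obtain K where K: "\<And>s. 0 < s \<Longrightarrow> s \<le> 1 \<Longrightarrow> y' + s *\<^sub>R (a - y') \<in> interior D \<and>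
      norm (gpsi (y' + s *\<^sub>R (a - y'))) \<le> K"
    using is_mirror_step_gradient_bounded[OF psi X e step a] by blast
  define ys where "ys k = y' + inverse (real (Suc k)) *\<^sub>R (a - y')" for k
  have ys: "ys k \<in> interior D \<and> norm (gpsi (ys k)) \<le> K" for k
    unfolding ys_def by (rule K) (simp_all add: inverse_le_1_iff)
  have "ys \<longlonglongrightarrow> y' + 0 *\<^sub>R (a - y')"
    unfolding ys_def by (intro tendsto_intros LIMSEQ_inverse_real_of_nat)
  then have "filterlim (\<lambda>k. norm (gpsi (ys k))) at_top sequentially"
    using barrier ys \<open>y' \<in> frontier D\<close> by simp
  then obtain k where "K + 1 \<le> norm (gpsi (ys k))"
    unfolding filterlim_at_top by (meson eventually_sequentially order.refl)
  then show False using ys[of k] by linarith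
qed

lemma is_mirror_step_bound:
  assumes psi: "regularizer_assm nrm X D psi gpsi" and nrm: "is_norm nrm" and X: "convex X"
    and e: "e > 0" and step: "is_mirror_step X psi gpsi gh e y y'"
    and y: "y \<in> interior D" and y': "y' \<in> interior D" and u: "u \<in> X"
  shows "e * inner gh (y - u) \<le> bregman psi gpsi u y - bregman psi gpsi u y' + e\<^sup>2 / 2 * (dual_norm nrm gh)\<^sup>2"
proof -
  define N where "N = nrm (y' - y)"
  have three_point: "bregman psi gpsi u y - bregman psi gpsi u y' - bregman psi gpsi y' y
      = inner (gpsi y') (u - y') - inner (u - y') (gpsi y)"
    unfolding bregman_def by (simp add: inner_diff_left inner_commute algebra_simps)
  have "y' \<in> D" using y' interior_subset by blast
  then have "N\<^sup>2 / 2 \<le> bregman psi gpsi y' y"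
    unfolding N_def by (rule bregman_ge_half_sq[OF psi y])
  moreover have "e * inner gh (y - y') \<le> e * (dual_norm nrm gh * N)"
    using inner_le_dual_norm_mult[OF nrm, of gh "y - y'"] is_norm_minus_commute[OF nrm, of y y'] e
    unfolding N_def by (simp add: mult_left_mono)
  moreover have "e * (dual_norm nrm gh * N) - N\<^sup>2 / 2 \<le> e\<^sup>2 / 2 * (dual_norm nrm gh)\<^sup>2"
    using zero_le_power2[of "e * dual_norm nrm gh - N"] by (simp add: power2_eq_square algebra_simps)
  moreover have "e * inner gh (y - u) = e * inner gh (y - y') - e * inner gh (u - y')"
    by (simp add: inner_diff_right algebra_simps)
  ultimately show ?thesis
    using is_mirror_step_optimality[OF psi X u e step y'] three_point by linarith
qed

section \<open>Summation identities\<close>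

lemma last_value_suffix_identity:
  fixes q :: "nat \<Rightarrow> real"
  assumes "0 < c" "c \<le> T"
  shows "q T = (\<Sum>t = c..T. q t) / real (T - c + 1)
     + (\<Sum>j = c..T - 1. (\<Sum>t = j..T. q t - q j) / (real (T - j) * real (T - j + 1)))"
  using assms(2,1)
proof (induction c rule: inc_induct)
  case base
  then show ?case by simp
next
  case (step n)
  define m where "m = real (T - n)"
  define A where "A = (\<Sum>t = Suc n..T. q t)"
  define R where "R = (\<Sum>j = Suc n..T - 1. (\<Sum>t = j..T. q t - q j) / (real (T - j) * real (T - j + 1)))"
  have m: "m \<noteq> 0" "m + 1 \<noteq> 0" "real (T - Suc n + 1) = m" "real (T - n + 1) = m + 1"
    using step.hyps unfolding m_def by auto
  have sum_q: "(\<Sum>t = n..T. q t) = q n + A"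
    unfolding A_def using step.hyps by (simp add: sum.atLeast_Suc_atMost)
  have "(\<Sum>j = n..T - 1. (\<Sum>t = j..T. q t - q j) / (real (T - j) * real (T - j + 1)))
      = (A - m * q n) / (m * (m + 1)) + R"
    using sum_q step.hyps unfolding R_def m_def
    by (simp add: sum.atLeast_Suc_atMost sum_subtractf of_nat_diff algebra_simps)
  moreover have "(q n + A) / (m + 1) + (A - m * q n) / (m * (m + 1)) = A / m"
  proof -
    have "(q n + A) / (m + 1) + (A - m * q n) / (m * (m + 1))
        = (m * (q n + A) + (A - m * q n)) / (m * (m + 1))"
      using m by (simp add: add_divide_distrib)
    also have "m * (q n + A) + (A - m * q n) = A * (m + 1)" by (simp add: algebra_simps)
    also have "A * (m + 1) / (m * (m + 1)) = A / m" using m(2) by simp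
    finally show ?thesis .
  qed
  moreover have "q T = A / m + R"
    using step.IH step.prems step.hyps unfolding A_def R_def m(3) by simp
  ultimately show ?case unfolding sum_q m(4) by simp
qed

lemma sum_weighted_telescope_le:
  fixes b e :: "nat \<Rightarrow> real"
  assumes "j \<le> n" "b j = 0" "\<And>t. j \<le> t \<Longrightarrow> 0 \<le> b t" "\<And>t. j \<le> t \<Longrightarrow> 0 \<le> e t"
    and increment: "\<And>t. j < t \<Longrightarrow> t \<le> n \<Longrightarrow> e t - e (t - 1) \<le> \<kappa>"
  shows "(\<Sum>t = j..n. e t * (b t - b (Suc t))) \<le> \<kappa> * (\<Sum>t = j..n. b t)"
proof -
  have "(\<Sum>t = j..n. e t * (b t - b (Suc t))) \<le> \<kappa> * (\<Sum>t = j..n. b t) - e n * b (Suc n)"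
    using assms(1) increment
  proof (induction n rule: dec_induct)
    case base
    then show ?case using assms(2) by (simp add: algebra_simps)
  next
    case (step n)
    have "(e (Suc n) - e n) * b (Suc n) \<le> \<kappa> * b (Suc n)"
      using step.prems[of "Suc n"] step.hyps assms(3) by (intro mult_right_mono) auto
    then show ?case using step by (simp add: algebra_simps)
  qed
  moreover have "0 \<le> e n * b (Suc n)" using assms(1,3,4) by simp
  ultimately show ?thesis by linarith
qed

lemma sum_triangle_swap:
  fixes F :: "nat \<Rightarrow> nat \<Rightarrow> 'b::comm_monoid_add"
  shows "(\<Sum>j = c..T - 1. \<Sum>t = j..T. F j t) = (\<Sum>t = c..T. \<Sum>j = c..min t (T - 1). F j t)"
proof -
  have "(\<Sum>j = c..T - 1. \<Sum>t = j..T. F j t) = (\<Sum>j = c..T - 1. \<Sum>t = c..T. if j \<le> t then F j t else 0)"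
  proof (rule sum.cong[OF refl])
    fix j assume "j \<in> {c..T - 1}"
    then have "{t \<in> {c..T}. j \<le> t} = {j..T}" by auto
    then show "(\<Sum>t = j..T. F j t) = (\<Sum>t = c..T. if j \<le> t then F j t else 0)"
      using sum.inter_filter[of "{c..T}" "F j" "\<lambda>t. j \<le> t"] by simp
  qed
  also have "\<dots> = (\<Sum>t = c..T. \<Sum>j = c..T - 1. if j \<le> t then F j t else 0)"
    by (rule sum.swap)
  also have "\<dots> = (\<Sum>t = c..T. \<Sum>j = c..min t (T - 1). F j t)"
  proof (rule sum.cong[OF refl])
    fix t assume "t \<in> {c..T}"
    have "{j \<in> {c..T - 1}. j \<le> t} = {c..min t (T - 1)}" by auto
    then show "(\<Sum>j = c..T - 1. if j \<le> t then F j t else 0) = (\<Sum>j = c..min t (T - 1). F j t)"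
      using sum.inter_filter[of "{c..T - 1}" "\<lambda>j. F j t" "\<lambda>j. j \<le> t"] by simp
  qed
  finally show ?thesis .
qed

lemma sqrt_diff_pred_le:
  assumes "1 \<le> t" "0 < T" "real T \<le> 2 * real t"
  shows "sqrt (real t) - sqrt (real (t - 1)) \<le> sqrt 2 / sqrt (real T)"
proof -
  have pos: "sqrt (real t) > 0" using assms(1) by simp
  have "(sqrt (real t) - sqrt (real t - 1)) * (sqrt (real t) + sqrt (real t - 1)) = 1"
    using assms(1) by (simp add: algebra_simps)
  moreover have "sqrt (real t) \<le> sqrt (real t) + sqrt (real t - 1)" using assms(1) by simp
  moreover have "0 \<le> sqrt (real t) - sqrt (real t - 1)" by simp
  ultimately have "(sqrt (real t) - sqrt (real t - 1)) * sqrt (real t) \<le> 1"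
    by (metis mult_left_mono)
  then have "sqrt (real t) - sqrt (real t - 1) \<le> 1 / sqrt (real t)"
    using pos by (simp add: field_simps)
  also have "\<dots> \<le> sqrt 2 / sqrt (real T)"
  proof -
    have "sqrt (real T) \<le> sqrt 2 * sqrt (real t)"
      using assms(3) by (simp add: real_sqrt_mult[symmetric])
    then show ?thesis using pos assms(2) by (simp add: field_simps)
  qed
  finally show ?thesis using assms(1) by (simp add: of_nat_diff)
qed

lemma ceiling_half_bounds:
  fixes T :: nat assumes "1 \<le> T"
  shows "1 \<le> nat \<lceil>real T / 2\<rceil>" "nat \<lceil>real T / 2\<rceil> \<le> T"
    "real T \<le> 2 * real (nat \<lceil>real T / 2\<rceil>)" "2 * real (nat \<lceil>real T / 2\<rceil>) \<le> real T + 1"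
proof -
  define k where "k = \<lceil>real T / 2\<rceil>"
  have "real T / 2 \<le> of_int k" "of_int k < real T / 2 + 1" unfolding k_def by linarith+
  moreover have "real T \<ge> 1" using assms by simp
  moreover have "2 * k \<le> int T + 1"
    using \<open>of_int k < real T / 2 + 1\<close> by linarith
  ultimately have "1 \<le> k" "2 * k \<le> int T + 1" "real T \<le> 2 * of_int k" by linarith+
  then show "1 \<le> nat \<lceil>real T / 2\<rceil>" "nat \<lceil>real T / 2\<rceil> \<le> T"
    "real T \<le> 2 * real (nat \<lceil>real T / 2\<rceil>)" "2 * real (nat \<lceil>real T / 2\<rceil>) \<le> real T + 1"
    unfolding k_def[symmetric] by (simp_all add: of_nat_nat)
qed

section \<open>Stochastic mirror descent\<close>

locale stochastic_mirror_descent =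
  fixes nrm :: "'a::euclidean_space \<Rightarrow> real" and X D :: "'a set"
    and psi :: "'a \<Rightarrow> real" and gpsi :: "'a \<Rightarrow> 'a" and f :: "'a \<Rightarrow> real"
    and x g \<xi> :: "nat \<Rightarrow> 'a" and \<eta> :: real
  assumes nrm: "is_norm nrm" and convex_X: "convex X" and psi: "regularizer_assm nrm X D psi gpsi"
    and start: "x 1 \<in> X \<inter> interior D"
    and subgradient: "\<And>t. 1 \<le> t \<Longrightarrow> g t \<in> subgrad X f (x t)"
    and mirror_step: "\<And>t. 1 \<le> t \<Longrightarrow>
      is_mirror_step X psi gpsi (g t - \<xi> t) (\<eta> / sqrt (real t)) (x t) (x (Suc t))"
    and eta_pos: "0 < \<eta>"
begin

lemma iterate_mem:
  assumes "1 \<le> t" shows "x t \<in> X \<and> x t \<in> interior D"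
  using assms
proof (induction t rule: dec_induct)
  case (step t)
  have "x (Suc t) \<in> X" using mirror_step[OF step.hyps(1)] unfolding is_mirror_step_def by blast
  moreover have "x (Suc t) \<in> interior D"
    using step eta_pos by (intro is_mirror_step_interior[OF psi convex_X _ mirror_step]) auto
  ultimately show ?case by blast
qed (use start in simp)

lemma regret_step:
  assumes t: "1 \<le> t" and u: "u \<in> X"
  shows "f (x t) - f u \<le> inner (\<xi> t) (x t - u)
    + \<eta> / (2 * sqrt (real t)) * (dual_norm nrm (g t - \<xi> t))\<^sup>2
    + sqrt (real t) / \<eta> * (bregman psi gpsi u (x t) - bregman psi gpsi u (x (Suc t)))"
proof -
  define e where "e = \<eta> / sqrt (real t)"
  have e: "0 < e" unfolding e_def using eta_pos t by simp
  have "e * inner (g t - \<xi> t) (x t - u)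
      \<le> bregman psi gpsi u (x t) - bregman psi gpsi u (x (Suc t)) + e\<^sup>2 / 2 * (dual_norm nrm (g t - \<xi> t))\<^sup>2"
    using iterate_mem[OF t] iterate_mem[of "Suc t"] mirror_step[OF t] t u
    unfolding e_def by (intro is_mirror_step_bound[OF psi nrm convex_X]) (auto simp: e_def[symmetric] e)
  then have "inner (g t - \<xi> t) (x t - u)
      \<le> (bregman psi gpsi u (x t) - bregman psi gpsi u (x (Suc t))) / e + e / 2 * (dual_norm nrm (g t - \<xi> t))\<^sup>2"
    using e by (simp add: field_simps power2_eq_square)
  moreover have "(bregman psi gpsi u (x t) - bregman psi gpsi u (x (Suc t))) / e
      = sqrt (real t) / \<eta> * (bregman psi gpsi u (x t) - bregman psi gpsi u (x (Suc t)))"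
    "e / 2 = \<eta> / (2 * sqrt (real t))"
    unfolding e_def by simp_all
  moreover have "f (x t) - f u \<le> inner (g t) (x t - u)"
    using subgradient[OF t] u unfolding subgrad_def by (force simp: inner_diff_right)
  ultimately show ?thesis by (simp add: inner_diff_left)
qed

lemma anchored_regret:
  assumes j: "1 \<le> j" "j \<le> T" "real T \<le> 2 * real j"
  shows "(\<Sum>t = j..T. f (x t) - f (x j))
    \<le> (\<Sum>t = j..T. inner (\<xi> t) (x t - x j))
      + \<eta> / sqrt (2 * real T) * (\<Sum>t = j..T. (dual_norm nrm (g t - \<xi> t))\<^sup>2)
      + sqrt 2 / (\<eta> * sqrt (real T)) * (\<Sum>t = j..T. bregman psi gpsi (x j) (x t))"
proof -
  define B where "B t = bregman psi gpsi (x j) (x t)" for t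
  define DN where "DN t = dual_norm nrm (g t - \<xi> t)" for t
  have step_size: "\<eta> / (2 * sqrt (real t)) \<le> \<eta> / sqrt (2 * real T)" if "j \<le> t" for t
  proof -
    have "sqrt (2 * real T) \<le> sqrt (4 * real t)" using j that by simp
    also have "\<dots> = 2 * sqrt (real t)" by (simp add: real_sqrt_mult)
    finally show ?thesis using eta_pos j that by (intro divide_left_mono) auto
  qed
  have "(\<Sum>t = j..T. f (x t) - f (x j))
      \<le> (\<Sum>t = j..T. inner (\<xi> t) (x t - x j) + \<eta> / sqrt (2 * real T) * (DN t)\<^sup>2
           + sqrt (real t) / \<eta> * (B t - B (Suc t)))"
  proof (rule sum_mono)
    fix t assume "t \<in> {j..T}"
    then show "f (x t) - f (x j) \<le> inner (\<xi> t) (x t - x j) + \<eta> / sqrt (2 * real T) * (DN t)\<^sup>2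
        + sqrt (real t) / \<eta> * (B t - B (Suc t))"
      using regret_step[of t "x j"] iterate_mem[of j] mult_right_mono[OF step_size, of t "(DN t)\<^sup>2"] j
      unfolding B_def DN_def by fastforce
  qed
  also have "\<dots> = (\<Sum>t = j..T. inner (\<xi> t) (x t - x j)) + \<eta> / sqrt (2 * real T) * (\<Sum>t = j..T. (DN t)\<^sup>2)
      + (\<Sum>t = j..T. sqrt (real t) / \<eta> * (B t - B (Suc t)))"
    by (simp add: sum.distrib sum_distrib_left)
  also have "(\<Sum>t = j..T. sqrt (real t) / \<eta> * (B t - B (Suc t))) \<le> sqrt 2 / (\<eta> * sqrt (real T)) * (\<Sum>t = j..T. B t)"
  proof (rule sum_weighted_telescope_le)
    show "0 \<le> B t" if "j \<le> t" for t
      unfolding B_def using iterate_mem j that regularizer_assmD(2)[OF psi]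
      by (intro bregman_nonneg[OF psi]) auto
    show "sqrt (real t) / \<eta> - sqrt (real (t - 1)) / \<eta> \<le> sqrt 2 / (\<eta> * sqrt (real T))"
      if "j < t" "t \<le> T" for t
      using divide_right_mono[OF sqrt_diff_pred_le[of t T] less_imp_le[OF eta_pos]] j that
      by (simp add: diff_divide_distrib mult.commute)
  qed (use j eta_pos in \<open>auto simp: B_def\<close>)
  finally show ?thesis unfolding B_def DN_def by linarith
qed

lemma weighted_anchored_regret:
  fixes \<alpha> :: "nat \<Rightarrow> real"
  assumes c: "1 \<le> c" "real T \<le> 2 * real c" and \<alpha>: "\<And>j. 0 \<le> \<alpha> j"
  shows "(\<Sum>j = c..T - 1. \<alpha> j * (\<Sum>t = j..T. f (x t) - f (x j)))
    \<le> (\<Sum>t = c..T. inner (\<xi> t) (\<Sum>j = c..min t (T - 1). \<alpha> j *\<^sub>R (x t - x j)))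
      + \<eta> / sqrt (2 * real T) * (\<Sum>t = c..T. (\<Sum>j = c..min t (T - 1). \<alpha> j) * (dual_norm nrm (g t - \<xi> t))\<^sup>2)
      + sqrt 2 / (\<eta> * sqrt (real T))
        * (\<Sum>t = c..T. \<Sum>j = c..min t (T - 1). \<alpha> j * bregman psi gpsi (x j) (x t))"
proof -
  have "(\<Sum>j = c..T - 1. \<alpha> j * (\<Sum>t = j..T. f (x t) - f (x j)))
    \<le> (\<Sum>j = c..T - 1. \<alpha> j * ((\<Sum>t = j..T. inner (\<xi> t) (x t - x j))
      + \<eta> / sqrt (2 * real T) * (\<Sum>t = j..T. (dual_norm nrm (g t - \<xi> t))\<^sup>2)
      + sqrt 2 / (\<eta> * sqrt (real T)) * (\<Sum>t = j..T. bregman psi gpsi (x j) (x t))))"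
    using c by (intro sum_mono mult_left_mono[OF anchored_regret \<alpha>]) auto
  also have "\<dots> = (\<Sum>j = c..T - 1. \<Sum>t = j..T. inner (\<xi> t) (\<alpha> j *\<^sub>R (x t - x j)))
      + \<eta> / sqrt (2 * real T) * (\<Sum>j = c..T - 1. \<Sum>t = j..T. \<alpha> j * (dual_norm nrm (g t - \<xi> t))\<^sup>2)
      + sqrt 2 / (\<eta> * sqrt (real T)) * (\<Sum>j = c..T - 1. \<Sum>t = j..T. \<alpha> j * bregman psi gpsi (x j) (x t))"
    by (simp add: sum.distrib sum_distrib_left algebra_simps)
  finally show ?thesis
    unfolding sum_triangle_swap by (simp add: inner_sum_right sum_distrib_right)
qed

end

theorem lemma1:
  fixes nrm :: "'a::euclidean_space \<Rightarrow> real"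
    and X D :: "'a set" and f psi :: "'a \<Rightarrow> real" and gpsi :: "'a \<Rightarrow> 'a"
    and xstar :: 'a and x g \<xi> :: "nat \<Rightarrow> 'a" and \<eta> :: real and T :: nat
  assumes nrm: "is_norm nrm"
    and X: "X \<noteq> {}" "closed X" "convex X"
    and f_convex: "convex_on X f"
    and xstar: "xstar \<in> X" "\<forall>y\<in>X. f xstar \<le> f y"
    and psi: "regularizer_assm nrm X D psi gpsi"
    and x1: "x 1 \<in> X \<inter> interior D"
    and subg: "\<forall>t\<ge>1. g t \<in> subgrad X f (x t)"
    and step: "\<forall>t\<ge>1. x (Suc t) \<in> X \<and>
       (\<forall>y\<in>X. inner (g t - \<xi> t) (x (Suc t)) + bregman psi gpsi (x (Suc t)) (x t) / (\<eta> / sqrt (real t))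
              \<le> inner (g t - \<xi> t) y + bregman psi gpsi y (x t) / (\<eta> / sqrt (real t)))"
    and T: "T \<ge> 1" and eta: "\<eta> > 0"
  shows
   "let c = nat \<lceil>real T / 2\<rceil>;
        \<alpha> = (\<lambda>j. 1 / (real (T - j) * real (T - j + 1)));
        w = (\<lambda>t. \<Sum>j = c..min t (T - 1). \<alpha> j *\<^sub>R (x t - x j));
        z = (\<lambda>t. \<Sum>j = c..min t (T - 1). \<alpha> j * bregman psi gpsi (x j) (x t));
        \<rho> = (\<lambda>t. \<Sum>j = c..min t (T - 1). \<alpha> j)
    in f (x T) - f xstar
       \<le> 2 / real T * (\<Sum>t = c..T. f (x t) - f xstar)
         + (\<Sum>t = c..T. inner (\<xi> t) (w t))
         + \<eta> / sqrt (2 * real T) * (\<Sum>t = c..T. \<rho> t * (dual_norm nrm (g t - \<xi> t))\<^sup>2)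
         + sqrt 2 / (\<eta> * sqrt (real T)) * (\<Sum>t = c..T. z t)"
proof -
  interpret stochastic_mirror_descent nrm X D psi gpsi f x g \<xi> \<eta>
    using nrm X(3) psi x1 subg step eta by unfold_locales (auto simp: is_mirror_step_def)
  define c where "c = nat \<lceil>real T / 2\<rceil>"
  define \<alpha> where "\<alpha> j = 1 / (real (T - j) * real (T - j + 1))" for j
  define q where "q t = f (x t) - f xstar" for t
  have \<alpha>_nonneg: "\<And>j. 0 \<le> \<alpha> j" unfolding \<alpha>_def by simp
  have c: "1 \<le> c" "c \<le> T" "real T \<le> 2 * real c" "2 * real c \<le> real T + 1"
    using ceiling_half_bounds[OF T] unfolding c_def by auto
  have "q T = (\<Sum>t = c..T. q t) / real (T - c + 1)
      + (\<Sum>j = c..T - 1. \<alpha> j * (\<Sum>t = j..T. f (x t) - f (x j)))"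
    using last_value_suffix_identity[of c T q] c unfolding \<alpha>_def q_def by simp
  moreover have "(\<Sum>t = c..T. q t) / real (T - c + 1) \<le> 2 / real T * (\<Sum>t = c..T. q t)"
  proof -
    have "0 \<le> (\<Sum>t = c..T. q t)"
      using iterate_mem c xstar unfolding q_def by (intro sum_nonneg) auto
    moreover have "1 / real (T - c + 1) \<le> 2 / real T"
      using c T by (simp add: of_nat_diff field_simps)
    ultimately show ?thesis by (metis mult_right_mono times_divide_eq_left mult_1 mult.commute)
  qed
  moreover note weighted_anchored_regret[of c T \<alpha>, OF c(1,3) \<alpha>_nonneg]
  ultimately show ?thesis
    unfolding Let_def c_def[symmetric] \<alpha>_def[symmetric] q_def by linarith
qed

end
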